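(* If $X\in \mathcal{B(H)}$ and $q \in \mathcal{D'}$, then \[ w_q \left(\begin{bmatrix} 0 & X\\ X & 0 \end{bmatrix}\right) \ge \frac{|q|}{2}\|X\|+ \frac{|q|}{2}\big|\|\mathcal{R}(X)\|-\|\mathcal{I}(X)\|\big|. \]
   Context: $\mathcal{H}$ is a complex Hilbert space, $\mathcal{B(H)}$ the bounded operators on it with operator norm; $2\times2$ operator matrices act on $\mathcal{H}\oplus\mathcal{H}$. $\mathcal{R}(X)=\frac{X+X^*}{2}$, $\mathcal{I}(X)=\frac{X-X^*}{2i}$. $\mathcal{D}$ is the closed unit disc in $\mathbb{C}$, $\mathcal{D'}=\mathcal{D}\setminus\{0\}$. $w_q(T)=\sup\{|\langle Tx,y\rangle| : \|x\|=\|y\|=1,\ \langle x,y\rangle=q\}$. *)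

theory Defs
  imports "HOL-Analysis.Analysis"
begin

class scaleC =
  fixes scaleC :: "complex \<Rightarrow> 'a \<Rightarrow> 'a" (infixr \<open>*\<^sub>C\<close> 75)

class complex_vector = scaleC + ab_group_add +
  assumes scaleC_add_right: "a *\<^sub>C (x + y) = a *\<^sub>C x + a *\<^sub>C y"
    and scaleC_add_left: "(a + b) *\<^sub>C x = a *\<^sub>C x + b *\<^sub>C x"
    and scaleC_scaleC: "a *\<^sub>C (b *\<^sub>C x) = (a * b) *\<^sub>C x"
    and scaleC_one: "1 *\<^sub>C x = x"

text \<open>Complex inner product, linear in the first argument and conjugate linear in the
  second; the real normed structure is the one induced by it.\<close>
class complex_inner = complex_vector + real_normed_vector +
  fixes cinner :: "'a \<Rightarrow> 'a \<Rightarrow> complex"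
  assumes scaleR_scaleC: "scaleR r x = complex_of_real r *\<^sub>C x"
    and cinner_cnj: "cinner y x = cnj (cinner x y)"
    and cinner_add_left: "cinner (x + y) z = cinner x z + cinner y z"
    and cinner_scaleC_left: "cinner (c *\<^sub>C x) y = c * cinner x y"
    and cinner_ge_zero: "0 \<le> Re (cinner x x)"
    and cinner_eq_zero_iff: "cinner x x = 0 \<longleftrightarrow> x = 0"
    and norm_eq_sqrt_cinner: "norm x = sqrt (Re (cinner x x))"

class chilbert_space = complex_inner + complete_space

instantiation prod :: (complex_vector, complex_vector) complex_vector
begin
definition scaleC_prod_def: "c *\<^sub>C x = (c *\<^sub>C fst x, c *\<^sub>C snd x)"
instance
  by standard (auto simp: scaleC_prod_def scaleC_add_right scaleC_add_left scaleC_scaleC scaleC_one)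
end

instantiation prod :: (complex_inner, complex_inner) complex_inner
begin
definition cinner_prod_def: "cinner x y = cinner (fst x) (fst y) + cinner (snd x) (snd y)"

lemma cinner_self_Re: "Re (cinner (x::'c::complex_inner) x) = (norm x)\<^sup>2"
  using norm_eq_sqrt_cinner[of x] cinner_ge_zero[of x] by simp

instance
proof
  fix r :: real and x :: "'a \<times> 'b"
  show "scaleR r x = complex_of_real r *\<^sub>C x"
    by (simp add: scaleC_prod_def scaleR_scaleC scaleR_prod_def)
next
  fix x y :: "'a \<times> 'b"
  show "cinner y x = cnj (cinner x y)"
    by (simp add: cinner_prod_def cinner_cnj[of "fst x"] cinner_cnj[of "snd x"])
next
  fix x y z :: "'a \<times> 'b"
  show "cinner (x + y) z = cinner x z + cinner y z"
    by (simp add: cinner_prod_def cinner_add_left)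
next
  fix c :: complex and x y :: "'a \<times> 'b"
  show "cinner (c *\<^sub>C x) y = c * cinner x y"
    by (simp add: cinner_prod_def scaleC_prod_def cinner_scaleC_left distrib_left)
next
  fix x :: "'a \<times> 'b"
  show "0 \<le> Re (cinner x x)"
    by (simp add: cinner_prod_def cinner_self_Re)
next
  fix x :: "'a \<times> 'b"
  have im1: "Im (cinner (fst x) (fst x)) = 0"
    using cinner_cnj[of "fst x" "fst x"] by (metis cnj.sel(2) equal_neg_zero)
  have im2: "Im (cinner (snd x) (snd x)) = 0"
    using cinner_cnj[of "snd x" "snd x"] by (metis cnj.sel(2) equal_neg_zero)
  show "cinner x x = 0 \<longleftrightarrow> x = 0"
  proof
    assume h: "cinner x x = 0"
    hence "(norm (fst x))\<^sup>2 + (norm (snd x))\<^sup>2 = 0"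
      by (metis cinner_prod_def cinner_self_Re plus_complex.sel(1) zero_complex.sel(1))
    hence "fst x = 0" "snd x = 0"
      by (simp_all add: add_nonneg_eq_0_iff)
    thus "x = 0" by (simp add: prod_eq_iff)
  qed (simp add: cinner_prod_def cinner_eq_zero_iff[THEN iffD2])
next
  fix x :: "'a \<times> 'b"
  show "norm x = sqrt (Re (cinner x x))"
    by (simp add: norm_prod_def cinner_prod_def cinner_self_Re)
qed
end

definition bounded_clinear :: "('a::complex_inner \<Rightarrow> 'b::complex_inner) \<Rightarrow> bool" where
  "bounded_clinear f \<longleftrightarrow>
     (\<forall>x y. f (x + y) = f x + f y) \<and> (\<forall>c x. f (c *\<^sub>C x) = c *\<^sub>C f x) \<and>
     (\<exists>K. \<forall>x. norm (f x) \<le> norm x * K)"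

text \<open>Operator norm of a bounded operator: the library's \<open>onorm\<close>.\<close>

definition cadjoint :: "('a::complex_inner \<Rightarrow> 'a) \<Rightarrow> ('a \<Rightarrow> 'a)" where
  "cadjoint X = (THE Y. \<forall>x y. cinner (X x) y = cinner x (Y y))"

definition ReOp :: "('a::complex_inner \<Rightarrow> 'a) \<Rightarrow> ('a \<Rightarrow> 'a)" where
  "ReOp X = (\<lambda>x. (1/2) *\<^sub>C (X x + cadjoint X x))"

definition ImOp :: "('a::complex_inner \<Rightarrow> 'a) \<Rightarrow> ('a \<Rightarrow> 'a)" where
  "ImOp X = (\<lambda>x. (1/(2*\<i>)) *\<^sub>C (X x - cadjoint X x))"

definition offdiag :: "('a \<Rightarrow> 'a) \<Rightarrow> ('a \<times> 'a \<Rightarrow> 'a \<times> 'a)" where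
  "offdiag X = (\<lambda>(x1, x2). (X x2, X x1))"

text \<open>q-numerical radius. The value 0 is included so that the supremum of the empty
  set (trivial space) is 0; all elements are nonnegative anyway.\<close>
definition wq :: "complex \<Rightarrow> ('a::complex_inner \<Rightarrow> 'a) \<Rightarrow> real" where
  "wq q T = Sup (insert 0 {cmod (cinner (T x) y) | x y.
                   norm x = 1 \<and> norm y = 1 \<and> cinner x y = q})"

end

theory Submission
  imports Defs
begin

text \<open>
  For a unit vector \<open>z\<close> put \<open>s = \<surd>(1 - \<bar>q\<bar>\<^sup>2)\<close>; the unit vectors
  \<open>x = (z, z)/\<surd>2\<close> and \<open>y = ((q\<^sup>* + s) z, (q\<^sup>* - s) z)/\<surd>2\<close> of \<open>H \<oplus> H\<close> satisfy
  \<open>\<langle>x, y\<rangle> = q\<close> and \<open>\<langle>T x, y\<rangle> = q \<langle>X z, z\<rangle>\<close> for \<open>T = [0, X; X, 0]\<close>, so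
  \<open>w\<^sub>q(T) \<ge> \<bar>q\<bar> w(X)\<close>, where \<open>w\<close> is the numerical radius.
  By polarization, \<open>\<parallel>\<R>(X)\<parallel>\<close> and \<open>\<parallel>\<I>(X)\<parallel>\<close> are at most \<open>w(X)\<close>, and \<open>X = \<R>(X) + \<i> \<I>(X)\<close>
  gives \<open>\<parallel>X\<parallel> \<le> \<parallel>\<R>(X)\<parallel> + \<parallel>\<I>(X)\<parallel>\<close>; hence
  \<open>w(X) \<ge> max \<parallel>\<R>(X)\<parallel> \<parallel>\<I>(X)\<parallel> \<ge> \<parallel>X\<parallel>/2 + \<bar>\<parallel>\<R>(X)\<parallel> - \<parallel>\<I>(X)\<parallel>\<bar>/2\<close>.
  The adjoint is defined by a description, so its existence has to be shown first: this is
  the Riesz representation theorem, proved by producing a norm-attaining unit vector as the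
  limit of a maximizing sequence, which is Cauchy by the parallelogram law.
\<close>

lemma cinner_add_right: "cinner x (y + z) = cinner x y + cinner x z"
  by (metis cinner_add_left cinner_cnj complex_cnj_add)

lemma cinner_scaleC_right: "cinner x (c *\<^sub>C y) = cnj c * cinner x y"
  by (metis cinner_scaleC_left cinner_cnj complex_cnj_mult complex_cnj_cnj)

lemma cinner_zero_left [simp]: "cinner 0 x = 0"
  using cinner_add_left[of 0 0 x] by simp

lemma cinner_zero_right [simp]: "cinner x 0 = 0"
  using cinner_add_right[of x 0 0] by simp

lemma cinner_minus_left: "cinner (- x) y = - cinner x y"
  using cinner_add_left[of x "- x" y] by (simp add: add_eq_0_iff)

lemma cinner_minus_right: "cinner x (- y) = - cinner x y"
  using cinner_add_right[of x y "- y"] by (simp add: add_eq_0_iff)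

lemma cinner_diff_left: "cinner (x - y) z = cinner x z - cinner y z"
  using cinner_add_left[of x "- y" z] by (simp add: cinner_minus_left)

lemma cinner_diff_right: "cinner x (y - z) = cinner x y - cinner x z"
  using cinner_add_right[of x y "- z"] by (simp add: cinner_minus_right)

lemma cinner_scaleR_right: "cinner x (r *\<^sub>R y) = of_real r * cinner x y"
  by (simp add: scaleR_scaleC cinner_scaleC_right)

lemma cinner_self: "cinner x x = of_real ((norm x)\<^sup>2)"
proof -
  have "Im (cinner x x) = 0"
    using cinner_cnj[of x x] by (metis cnj.sel(2) equal_neg_zero)
  then show ?thesis
    by (simp add: complex_eq_iff cinner_self_Re)
qed

lemma Re_cinner_commute: "Re (cinner y x) = Re (cinner x y)"
  by (metis cinner_cnj cnj.sel(1))

lemma norm_scaleC: "norm (c *\<^sub>C x) = cmod c * norm (x :: 'a::complex_inner)"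
proof -
  have "of_real ((norm (c *\<^sub>C x))\<^sup>2) = cinner (c *\<^sub>C x) (c *\<^sub>C x)"
    by (rule cinner_self[symmetric])
  also have "\<dots> = c * cnj c * cinner x x"
    by (simp add: cinner_scaleC_left cinner_scaleC_right)
  also have "\<dots> = of_real ((cmod c * norm x)\<^sup>2)"
    by (simp add: cinner_self complex_norm_square power_mult_distrib del: of_real_power)
  finally show ?thesis
    by (simp add: power2_eq_iff_nonneg del: of_real_power)
qed

lemma cinner_ext_left:
  assumes "\<And>w. cinner a w = cinner b w"
  shows "a = b"
proof -
  have "cinner (a - b) (a - b) = 0"
    using assms[of "a - b"] by (simp add: cinner_diff_left)
  then show ?thesis by (simp add: cinner_eq_zero_iff)
qed

lemma cinner_ext_right:
  assumes "\<And>w. cinner w a = cinner w b"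
  shows "a = b"
  using assms by (intro cinner_ext_left) (metis cinner_cnj)

lemma norm_add_power2:
  fixes x y :: "'a::complex_inner"
  shows "(norm (x + y))\<^sup>2 = (norm x)\<^sup>2 + 2 * Re (cinner x y) + (norm y)\<^sup>2"
  using arg_cong[OF cinner_self[of "x + y"], of Re]
  by (simp add: cinner_add_left cinner_add_right cinner_self_Re Re_cinner_commute[of y x])

lemma parallelogram_law:
  fixes x y :: "'a::complex_inner"
  shows "(norm (x + y))\<^sup>2 + (norm (x - y))\<^sup>2 = 2 * (norm x)\<^sup>2 + 2 * (norm y)\<^sup>2"
  using norm_add_power2[of x y] norm_add_power2[of x "- y"]
  by (simp add: cinner_minus_right)

lemma cmod_cinner_le:
  fixes x y :: "'a::complex_inner"
  shows "cmod (cinner x y) \<le> norm x * norm y"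
proof (cases "y = 0")
  case False
  define N where "N = (norm y)\<^sup>2"
  have N: "N > 0" using False by (simp add: N_def)
  define c where "c = cinner x y / of_real N"
  have "cinner x (c *\<^sub>C y) = of_real ((cmod (cinner x y))\<^sup>2) / of_real N"
    by (simp add: c_def cinner_scaleC_right complex_norm_square mult.commute del: of_real_power)
  then have "Re (cinner x (c *\<^sub>C y)) = (cmod (cinner x y))\<^sup>2 / N"
    by (simp only: Re_divide_of_real Re_complex_of_real)
  moreover have "(cmod c)\<^sup>2 * N = (cmod (cinner x y))\<^sup>2 / N"
    using N by (simp add: c_def norm_divide power_divide power2_eq_square)
  ultimately have "(norm (x - c *\<^sub>C y))\<^sup>2 = (norm x)\<^sup>2 - (cmod (cinner x y))\<^sup>2 / N"
    using norm_add_power2[of x "- (c *\<^sub>C y)"]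
    by (simp add: cinner_minus_right norm_scaleC N_def power_mult_distrib)
  then have "0 \<le> (norm x)\<^sup>2 - (cmod (cinner x y))\<^sup>2 / N"
    by (metis zero_le_power2)
  then have "(cmod (cinner x y))\<^sup>2 \<le> (norm x * norm y)\<^sup>2"
    using N by (simp add: field_simps N_def power_mult_distrib)
  then show ?thesis by (simp add: power2_le_iff_abs_le)
qed simp

section \<open>Riesz representation\<close>

lemma cnj_sgn_mult_self: "cnj (sgn z) * z = of_real (cmod z)"
proof (cases "z = 0")
  case False
  have "cnj (sgn z) * z = of_real ((cmod z)\<^sup>2) / of_real (cmod z)"
    by (simp add: sgn_div_norm scaleR_conv_of_real divide_inverse complex_norm_square mult_ac
        del: of_real_power)
  then show ?thesis
    using False by (simp add: power2_eq_square)
qed simp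

lemma onorm_approx_unit_ball:
  assumes f: "bounded_linear f" and "0 < e"
  obtains x where "norm x \<le> 1" and "onorm f - e < norm (f x)"
proof -
  interpret f: bounded_linear f by (fact f)
  have "\<exists>x. norm x \<le> 1 \<and> onorm f - e < norm (f x)"
  proof (rule ccontr)
    assume "\<not> ?thesis"
    then have small: "norm (f x) \<le> onorm f - e" if "norm x \<le> 1" for x
      using that by (meson not_less)
    have "norm (f x) \<le> (onorm f - e) * norm x" for x
    proof (cases "x = 0")
      case False
      have "norm (f (x /\<^sub>R norm x)) \<le> onorm f - e"
        by (rule small) (simp add: False)
      then show ?thesis
        using False by (simp add: f.scaleR field_simps)
    qed simp
    then have "onorm f \<le> onorm f - e"
      by (intro onorm_bound) (use small[of 0] in simp_all)
    with \<open>0 < e\<close> show False by simp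
  qed
  then show thesis using that by blast
qed

lemma Cauchy_maximizing_sequence:
  fixes f :: "'a::complex_inner \<Rightarrow> complex" and y :: "nat \<Rightarrow> 'a"
  assumes add: "\<And>x y. f (x + y) = f x + f y"
    and bound: "\<And>x. cmod (f x) \<le> s * norm x" and s: "0 < s"
    and unit: "\<And>n. norm (y n) \<le> 1"
    and large: "\<And>n. s - e n \<le> Re (f (y n))"
    and e: "e \<longlonglongrightarrow> 0"
  shows "Cauchy y"
proof -
  have close: "(norm (y m - y n))\<^sup>2 \<le> 4 * ((e m + e n) / s)" for m n
  proof -
    define d where "d = (e m + e n) / s"
    have "s * (2 - d) = 2 * s - (e m + e n)"
      using s by (simp add: d_def field_simps)
    also have "\<dots> \<le> Re (f (y m + y n))"
      using large[of m] large[of n] by (simp add: add)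
    also have "\<dots> \<le> s * norm (y m + y n)"
      using complex_Re_le_cmod bound order_trans by blast
    finally have lo: "2 - d \<le> norm (y m + y n)"
      using s by simp
    have "(norm (y m))\<^sup>2 \<le> 1" "(norm (y n))\<^sup>2 \<le> 1"
      using unit by (simp_all add: power_le_one)
    then have up: "(norm (y m - y n))\<^sup>2 \<le> 4 - (norm (y m + y n))\<^sup>2"
      using parallelogram_law[of "y m" "y n"] by linarith
    have "(norm (y m - y n))\<^sup>2 \<le> 4 * d"
    proof (cases "d \<le> 2")
      case True
      then have "(2 - d)\<^sup>2 \<le> (norm (y m + y n))\<^sup>2"
        using lo by (intro power_mono) auto
      moreover have "(2 - d)\<^sup>2 = 4 - 4 * d + d\<^sup>2"
        by (simp add: power2_eq_square algebra_simps)
      ultimately show ?thesis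
        using up zero_le_power2[of d] by linarith
    next
      case False
      then show ?thesis
        using up zero_le_power2[of "norm (y m + y n)"] by linarith
    qed
    then show ?thesis by (simp add: d_def)
  qed
  show ?thesis
  proof (rule metric_CauchyI)
    fix \<epsilon> :: real
    assume "0 < \<epsilon>"
    then have "0 < s * \<epsilon>\<^sup>2 / 8"
      using s by simp
    then obtain N where N: "\<And>n. n \<ge> N \<Longrightarrow> e n < s * \<epsilon>\<^sup>2 / 8"
      using order_tendstoD(2)[OF e] unfolding eventually_sequentially by blast
    have "dist (y m) (y n) < \<epsilon>" if "m \<ge> N" "n \<ge> N" for m n
    proof -
      have "(e m + e n) / s < \<epsilon>\<^sup>2 / 4"
        using N[OF that(1)] N[OF that(2)] s by (simp add: pos_divide_less_eq algebra_simps)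
      then have "(norm (y m - y n))\<^sup>2 < \<epsilon>\<^sup>2"
        using close[of m n] by linarith
      then show ?thesis
        using \<open>0 < \<epsilon>\<close> by (simp add: dist_norm power_less_imp_less_base)
    qed
    then show "\<exists>N. \<forall>m\<ge>N. \<forall>n\<ge>N. dist (y m) (y n) < \<epsilon>"
      by blast
  qed
qed

lemma functional_attains_onorm:
  fixes f :: "'a::chilbert_space \<Rightarrow> complex"
  assumes f: "bounded_linear f"
    and add: "\<And>x y. f (x + y) = f x + f y"
    and scaleC: "\<And>c x. f (c *\<^sub>C x) = c * f x"
    and pos: "0 < onorm f"
  obtains u where "norm u = 1" and "f u = of_real (onorm f)"
proof -
  define s where "s = onorm f"
  have bound: "cmod (f x) \<le> s * norm x" for x
    using onorm[OF f] by (simp add: s_def)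
  have "\<forall>n. \<exists>x. norm x \<le> 1 \<and> s - inverse (real (Suc n)) < cmod (f x)"
  proof
    fix n
    show "\<exists>x. norm x \<le> 1 \<and> s - inverse (real (Suc n)) < cmod (f (x))"
      using onorm_approx_unit_ball[OF f, of "inverse (real (Suc n))"] unfolding s_def by auto
  qed
  then obtain x where x: "\<And>n. norm (x n) \<le> 1" "\<And>n. s - inverse (real (Suc n)) < cmod (f (x n))"
    by metis
  define y where "y n = cnj (sgn (f (x n))) *\<^sub>C x n" for n
  have fy: "f (y n) = of_real (cmod (f (x n)))" for n
    by (simp add: y_def scaleC cnj_sgn_mult_self)
  have ny: "norm (y n) \<le> 1" for n
    using x(1)[of n] by (simp add: y_def norm_scaleC norm_sgn)
  have e: "(\<lambda>n. inverse (real (Suc n))) \<longlonglongrightarrow> 0"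
    by (rule LIMSEQ_inverse_real_of_nat)
  have "Cauchy y"
    by (rule Cauchy_maximizing_sequence[OF add bound _ ny _ e])
       (use pos x(2) in \<open>simp_all add: s_def fy less_imp_le\<close>)
  then obtain u where lim: "y \<longlonglongrightarrow> u"
    using Cauchy_convergent_iff convergent_def by blast
  have "norm u \<le> 1"
    using tendsto_norm[OF lim] by (rule LIMSEQ_le_const2) (auto intro: ny)
  have "s \<le> Re (f u)"
  proof (rule LIMSEQ_le)
    show "(\<lambda>n. s - inverse (real (Suc n))) \<longlonglongrightarrow> s"
      using tendsto_diff[OF tendsto_const e] by simp
    show "(\<lambda>n. Re (f (y n))) \<longlonglongrightarrow> Re (f u)"
      by (intro tendsto_Re bounded_linear.tendsto[OF f lim])
    show "\<exists>N. \<forall>n\<ge>N. s - inverse (real (Suc n)) \<le> Re (f (y n))"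
      using x(2) by (auto simp: fy less_imp_le)
  qed
  moreover have "Re (f u) \<le> cmod (f u)"
    by (rule complex_Re_le_cmod)
  moreover have "cmod (f u) \<le> s * norm u"
    by (rule bound)
  moreover have "s * norm u \<le> s"
    using \<open>norm u \<le> 1\<close> pos by (simp add: s_def mult_left_le)
  ultimately have "s * norm u = s * 1" "Re (f u) = s" "cmod (f u) = s"
    by linarith+
  then have "norm u = 1" "Re (f u) = s" "cmod (f u) = s"
    using pos by (simp_all add: s_def)
  moreover from this have "Im (f u) = 0"
    using cmod_power2[of "f u"] by simp
  ultimately show thesis
    using that by (simp add: s_def complex_eq_iff)
qed

lemma Re_le_of_norm_attained:
  fixes f :: "'a::complex_inner \<Rightarrow> complex"
  assumes add: "\<And>x y. f (x + y) = f x + f y"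
    and scaleR: "\<And>r x. f (r *\<^sub>R x) = of_real r * f x"
    and bound: "\<And>x. cmod (f x) \<le> s * norm x"
    and u: "norm u = 1" "f u = of_real s"
  shows "Re (f h) \<le> s * Re (cinner h u)"
proof -
  have s: "0 \<le> s"
    using bound[of u] u by simp
  define P where "P = Re (cinner h u)"
  define H where "H = (norm h)\<^sup>2"
  text \<open>First variation of \<open>v \<mapsto> s \<parallel>v\<parallel> - Re (f v)\<close>, which is minimal at \<open>u\<close>.\<close>
  have perturb: "Re (f h) \<le> s * P + t * (s * H / 2)" if t: "0 < t" for t
  proof -
    define v where "v = u + t *\<^sub>R h"
    have "s + t * Re (f h) = Re (f v)"
      by (simp add: v_def add scaleR u)
    also have "\<dots> \<le> s * norm v"
      using complex_Re_le_cmod bound order_trans by blast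
    also have "\<dots> \<le> s * (1 + t * P + t\<^sup>2 * H / 2)"
    proof (rule mult_left_mono[OF _ s])
      have "(norm v)\<^sup>2 = 1 + 2 * (t * P) + t\<^sup>2 * H"
        by (simp add: v_def norm_add_power2 u cinner_scaleR_right Re_cinner_commute[of u]
            P_def H_def power_mult_distrib)
      moreover have "2 * norm v \<le> (norm v)\<^sup>2 + 1"
        using sum_squares_bound[of "norm v" 1] by (simp add: power2_eq_square)
      ultimately show "norm v \<le> 1 + t * P + t\<^sup>2 * H / 2"
        by simp
    qed
    finally have "t * Re (f h) \<le> t * (s * P + t * (s * H / 2))"
      by (simp add: algebra_simps power2_eq_square)
    then show ?thesis
      using t by simp
  qed
  have "Re (f h) \<le> s * P"
  proof (rule field_le_epsilon)
    fix e :: real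
    assume e: "0 < e"
    have c: "0 \<le> s * H / 2"
      using s by (simp add: H_def)
    define t where "t = e / (s * H / 2 + 1)"
    have "0 < t" "t * (s * H / 2) \<le> e"
      using e c by (simp_all add: t_def field_simps)
    then show "Re (f h) \<le> s * P + e"
      using perturb[of t] by linarith
  qed
  then show ?thesis
    by (simp add: P_def)
qed

lemma eq_cinner_of_norm_attained:
  fixes f :: "'a::complex_inner \<Rightarrow> complex"
  assumes add: "\<And>x y. f (x + y) = f x + f y"
    and scaleC: "\<And>c x. f (c *\<^sub>C x) = c * f x"
    and bound: "\<And>x. cmod (f x) \<le> s * norm x"
    and u: "norm u = 1" "f u = of_real s"
  shows "f x = cinner x (of_real s *\<^sub>C u)"
proof -
  have scaleR: "f (r *\<^sub>R x) = of_real r * f x" for r x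
    by (simp add: scaleR_scaleC scaleC)
  note Re_le = Re_le_of_norm_attained[OF add scaleR bound u]
  have Re_eq: "Re (f h) = s * Re (cinner h u)" for h
    using Re_le[of h] Re_le[of "- h"] scaleR[of "- 1" h] by (simp add: cinner_minus_left)
  have "Im (f x) = s * Im (cinner x u)"
    using Re_eq[of "(- \<i>) *\<^sub>C x"] by (simp add: scaleC cinner_scaleC_left)
  then show ?thesis
    using Re_eq[of x] by (simp add: complex_eq_iff cinner_scaleC_right)
qed

lemma riesz_representation:
  fixes f :: "'a::chilbert_space \<Rightarrow> complex"
  assumes add: "\<And>x y. f (x + y) = f x + f y"
    and scaleC: "\<And>c x. f (c *\<^sub>C x) = c * f x"
    and bounded: "\<And>x. cmod (f x) \<le> norm x * K"
  obtains u where "\<And>x. f x = cinner x u"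
proof -
  have f: "bounded_linear f"
    by (rule bounded_linear_intro[where K = K])
       (auto simp: add scaleR_scaleC scaleC bounded scaleR_conv_of_real)
  show thesis
  proof (cases "onorm f = 0")
    case True
    then show thesis
      using that[of 0] onorm_eq_0[OF f] by simp
  next
    case False
    then have "0 < onorm f"
      using onorm_pos_le[OF f] by simp
    then obtain u where "norm u = 1" "f u = of_real (onorm f)"
      using functional_attains_onorm[OF f add scaleC] by blast
    then show thesis
      using that eq_cinner_of_norm_attained[OF add scaleC onorm[OF f]] by (metis norm_of_real)
  qed
qed

lemma bounded_clinear_add: "bounded_clinear X \<Longrightarrow> X (x + y) = X x + X y"
  by (simp add: bounded_clinear_def)

lemma bounded_clinear_scaleC: "bounded_clinear X \<Longrightarrow> X (c *\<^sub>C x) = c *\<^sub>C X x"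
  by (simp add: bounded_clinear_def)

lemma bounded_clinear_scaleR: "bounded_clinear X \<Longrightarrow> X (r *\<^sub>R x) = r *\<^sub>R X x"
  by (simp add: scaleR_scaleC bounded_clinear_scaleC)

lemma bounded_clinear_zero: "bounded_clinear X \<Longrightarrow> X 0 = 0"
  using bounded_clinear_add[of X 0 0] by simp

lemma bounded_clinear_diff: "bounded_clinear X \<Longrightarrow> X (x - y) = X x - X y"
  using bounded_clinear_add[of X "x - y" y] by (simp add: eq_diff_eq)

lemma bounded_clinear_nonneg_bound:
  assumes "bounded_clinear X"
  obtains K where "0 \<le> K" and "\<And>x. norm (X x) \<le> K * norm x"
proof -
  obtain K where K: "\<And>x. norm (X x) \<le> norm x * K"
    using assms by (auto simp: bounded_clinear_def)
  have "norm (X x) \<le> max K 0 * norm x" for x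
    using K[of x] mult_left_mono[of K "max K 0" "norm x"] by (simp add: mult.commute)
  then show thesis
    using that[of "max K 0"] by simp
qed

lemma cadjoint_exists:
  fixes X :: "'a::chilbert_space \<Rightarrow> 'a"
  assumes X: "bounded_clinear X"
  shows "\<exists>Y. \<forall>x y. cinner (X x) y = cinner x (Y y)"
proof -
  obtain K where K: "\<And>x. norm (X x) \<le> K * norm x"
    using bounded_clinear_nonneg_bound[OF X] by blast
  have "\<exists>u. \<forall>x. cinner (X x) y = cinner x u" for y
  proof -
    have "cmod (cinner (X x) y) \<le> norm x * (K * norm y)" for x
      using cmod_cinner_le[of "X x" y] mult_right_mono[OF K[of x] norm_ge_zero[of y]]
      by (simp add: mult_ac)
    then obtain u where "\<And>x. cinner (X x) y = cinner x u"
      using riesz_representation[of "\<lambda>x. cinner (X x) y"]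
      by (metis bounded_clinear_add[OF X] bounded_clinear_scaleC[OF X]
          cinner_add_left cinner_scaleC_left)
    then show ?thesis by blast
  qed
  then show ?thesis by metis
qed

lemma cinner_cadjoint:
  fixes X :: "'a::chilbert_space \<Rightarrow> 'a"
  assumes X: "bounded_clinear X"
  shows "cinner (X x) y = cinner x (cadjoint X y)"
proof -
  have "\<exists>!Y. \<forall>x y. cinner (X x) y = cinner x (Y y)"
  proof (rule ex_ex1I)
    fix Y Y'
    assume "\<forall>x y. cinner (X x) y = cinner x (Y y)" "\<forall>x y. cinner (X x) y = cinner x (Y' y)"
    then show "Y = Y'"
      by (intro ext cinner_ext_right) metis
  qed (rule cadjoint_exists[OF X])
  then have "\<forall>x y. cinner (X x) y = cinner x (cadjoint X y)"
    unfolding cadjoint_def by (rule theI')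
  then show ?thesis by blast
qed

lemma cinner_cadjoint_left:
  fixes X :: "'a::chilbert_space \<Rightarrow> 'a"
  assumes "bounded_clinear X"
  shows "cinner (cadjoint X x) y = cnj (cinner (X y) x)"
  by (metis cinner_cadjoint[OF assms] cinner_cnj)

lemma cinner_ReOp:
  fixes X :: "'a::chilbert_space \<Rightarrow> 'a"
  assumes "bounded_clinear X"
  shows "cinner (ReOp X x) y = (cinner (X x) y + cnj (cinner (X y) x)) / 2"
  by (simp add: ReOp_def cinner_scaleC_left cinner_add_left cinner_cadjoint_left[OF assms])

lemma cinner_ImOp:
  fixes X :: "'a::chilbert_space \<Rightarrow> 'a"
  assumes "bounded_clinear X"
  shows "cinner (ImOp X x) y = (- \<i> * cinner (X x) y + cnj (- \<i> * cinner (X y) x)) / 2"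
  by (simp add: ImOp_def cinner_scaleC_left cinner_diff_left cinner_cadjoint_left[OF assms]
      field_simps)

lemma ReOp_add_ImOp:
  fixes X :: "'a::chilbert_space \<Rightarrow> 'a"
  assumes "bounded_clinear X"
  shows "ReOp X x + \<i> *\<^sub>C ImOp X x = X x"
  by (rule cinner_ext_left)
     (simp add: cinner_add_left cinner_scaleC_left cinner_ReOp[OF assms] cinner_ImOp[OF assms]
       complex_eq_iff field_simps)

section \<open>Numerical range and operator norm\<close>

text \<open>The hypothesis on \<open>A\<close> says \<open>A = \<R>(c X)\<close>; for \<open>c = 1\<close> and \<open>c = -\<i>\<close> this gives
  \<open>\<R>(X)\<close> and \<open>\<I>(X)\<close>.\<close>

lemma Re_cinner_hermitian_part_le:
  fixes X A :: "'a::complex_inner \<Rightarrow> 'a"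
  assumes X: "bounded_clinear X"
    and A: "\<And>x y. cinner (A x) y = (c * cinner (X x) y + cnj (c * cinner (X y) x)) / 2"
    and c: "cmod c = 1"
    and M: "\<And>z. cmod (cinner (X z) z) \<le> M * (norm z)\<^sup>2"
  shows "Re (cinner (A x) y) \<le> M / 2 * ((norm x)\<^sup>2 + (norm y)\<^sup>2)"
proof -
  define P where "P = cinner (X (x + y)) (x + y)"
  define Q where "Q = cinner (X (x - y)) (x - y)"
  have "P - Q = 2 * (cinner (X x) y + cinner (X y) x)"
    by (simp add: P_def Q_def bounded_clinear_add[OF X] bounded_clinear_diff[OF X]
        cinner_add_left cinner_add_right cinner_diff_left cinner_diff_right)
  then have "Re (cinner (A x) y) = Re (c * (P - Q)) / 4"
    by (simp add: A distrib_left)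
  also have "\<dots> \<le> (cmod P + cmod Q) / 4"
    using complex_Re_le_cmod[of "c * (P - Q)"] norm_triangle_ineq4[of P Q]
    by (simp add: norm_mult c)
  also have "\<dots> \<le> M * ((norm (x + y))\<^sup>2 + (norm (x - y))\<^sup>2) / 4"
    using M[of "x + y"] M[of "x - y"] by (simp add: P_def Q_def distrib_left)
  also have "\<dots> = M / 2 * ((norm x)\<^sup>2 + (norm y)\<^sup>2)"
    by (simp only: parallelogram_law) (simp add: algebra_simps)
  finally show ?thesis .
qed

lemma norm_le_of_Re_cinner_le:
  fixes A :: "'a::complex_inner \<Rightarrow> 'a"
  assumes bound: "\<And>x y. Re (cinner (A x) y) \<le> M / 2 * ((norm x)\<^sup>2 + (norm y)\<^sup>2)"
    and "0 \<le> M" and "A 0 = 0"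
  shows "norm (A x) \<le> M * norm x"
proof (cases "x = 0 \<or> A x = 0")
  case False
  define y where "y = (norm x / norm (A x)) *\<^sub>R A x"
  have "norm y = norm x"
    using False by (simp add: y_def)
  moreover have "Re (cinner (A x) y) = norm x * norm (A x)"
    using False by (simp add: y_def cinner_scaleR_right cinner_self power2_eq_square)
  ultimately have "norm x * norm (A x) \<le> norm x * (M * norm x)"
    using bound[of x y] by (simp add: power2_eq_square mult_ac)
  then show ?thesis
    using False by simp
qed (use assms in auto)

lemma hermitian_part_onorm_le:
  fixes X A :: "'a::complex_inner \<Rightarrow> 'a"
  assumes X: "bounded_clinear X"
    and A: "\<And>x y. cinner (A x) y = (c * cinner (X x) y + cnj (c * cinner (X y) x)) / 2"
    and c: "cmod c = 1"
    and M: "\<And>z. cmod (cinner (X z) z) \<le> M * (norm z)\<^sup>2" and "0 \<le> M"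
  shows "bounded_linear A" and "onorm A \<le> M"
proof -
  have "A 0 = 0"
    by (rule cinner_ext_left) (simp add: A bounded_clinear_zero[OF X])
  note norm_A = norm_le_of_Re_cinner_le[OF Re_cinner_hermitian_part_le[OF X A c M] \<open>0 \<le> M\<close> this]
  have "A (x + y) = A x + A y" for x y
    by (rule cinner_ext_left)
       (simp add: A cinner_add_left cinner_add_right bounded_clinear_add[OF X] add_divide_distrib
         distrib_left)
  moreover have "A (r *\<^sub>R x) = r *\<^sub>R A x" for r x
    by (rule cinner_ext_left)
       (simp add: A scaleR_scaleC cinner_scaleC_left cinner_scaleC_right bounded_clinear_scaleC[OF X]
         algebra_simps)
  ultimately show "bounded_linear A"
    by (intro bounded_linear_intro[where K = M]) (auto simp: norm_A mult.commute)
  show "onorm A \<le> M"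
    by (rule onorm_bound[OF \<open>0 \<le> M\<close> norm_A])
qed

lemma cmod_cinner_le_of_unit:
  assumes X: "bounded_clinear X"
    and M: "\<And>z. norm z = 1 \<Longrightarrow> cmod (cinner (X z) z) \<le> M"
  shows "cmod (cinner (X z) z) \<le> M * (norm z)\<^sup>2"
proof (cases "z = 0")
  case False
  define u where "u = z /\<^sub>R norm z"
  have "cinner (X u) u = cinner (X z) z / of_real ((norm z)\<^sup>2)"
    unfolding u_def bounded_clinear_scaleR[OF X]
    by (simp add: scaleR_scaleC cinner_scaleC_left cinner_scaleC_right power2_eq_square
        field_simps)
  moreover have "norm u = 1"
    using False by (simp add: u_def)
  ultimately have "cmod (cinner (X z) z) / (norm z)\<^sup>2 \<le> M"
    using M[of u] by (simp add: norm_divide norm_power)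
  then show ?thesis
    using False by (simp add: pos_divide_le_eq)
qed (simp add: bounded_clinear_zero[OF X])

lemma numerical_radius_lower_bound:
  fixes X :: "'a::chilbert_space \<Rightarrow> 'a"
  assumes X: "bounded_clinear X"
    and M: "\<And>z. norm z = 1 \<Longrightarrow> cmod (cinner (X z) z) \<le> M" and "0 \<le> M"
  shows "onorm X / 2 + \<bar>onorm (ReOp X) - onorm (ImOp X)\<bar> / 2 \<le> M"
proof -
  note M' = cmod_cinner_le_of_unit[OF X M]
  have Re: "bounded_linear (ReOp X)" "onorm (ReOp X) \<le> M"
    by (rule hermitian_part_onorm_le[OF X _ _ M' \<open>0 \<le> M\<close>, of _ 1],
        simp_all add: cinner_ReOp[OF X])+
  have Im: "bounded_linear (ImOp X)" "onorm (ImOp X) \<le> M"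
    by (rule hermitian_part_onorm_le[OF X _ _ M' \<open>0 \<le> M\<close>, of _ "- \<i>"],
        simp_all add: cinner_ImOp[OF X])+
  have "onorm X \<le> onorm (ReOp X) + onorm (ImOp X)"
  proof (rule onorm_bound)
    show "0 \<le> onorm (ReOp X) + onorm (ImOp X)"
      by (simp add: onorm_pos_le Re(1) Im(1))
    fix x
    have "norm (X x) \<le> norm (ReOp X x) + norm (ImOp X x)"
      using norm_triangle_ineq[of "ReOp X x" "\<i> *\<^sub>C ImOp X x"]
      by (simp add: ReOp_add_ImOp[OF X] norm_scaleC)
    also have "\<dots> \<le> (onorm (ReOp X) + onorm (ImOp X)) * norm x"
      using onorm[OF Re(1), of x] onorm[OF Im(1), of x] by (simp add: distrib_right)
    finally show "norm (X x) \<le> (onorm (ReOp X) + onorm (ImOp X)) * norm x" .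
  qed
  then show ?thesis
    using Re(2) Im(2) by (auto split: abs_split simp: field_simps)
qed

section \<open>The off-diagonal operator matrix\<close>

lemma offdiag_bound:
  assumes "bounded_clinear X"
  obtains K where "0 \<le> K" and "\<And>u. norm (offdiag X u) \<le> K * norm u"
proof -
  obtain K where "0 \<le> K" and X: "\<And>x. norm (X x) \<le> K * norm x"
    using bounded_clinear_nonneg_bound[OF assms] by blast
  have "norm (offdiag X u) \<le> K * norm u" for u
  proof -
    obtain u1 u2 where u: "u = (u1, u2)"
      by (cases u)
    have "(norm (X u2))\<^sup>2 + (norm (X u1))\<^sup>2 \<le> (K * norm u2)\<^sup>2 + (K * norm u1)\<^sup>2"
      using X[of u1] X[of u2] by (intro add_mono power_mono) auto
    also have "\<dots> = (K * norm u)\<^sup>2"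
      by (simp add: u norm_Pair power_mult_distrib distrib_left)
    finally show ?thesis
      using \<open>0 \<le> K\<close> by (simp add: u offdiag_def norm_Pair real_le_lsqrt)
  qed
  with \<open>0 \<le> K\<close> show thesis
    using that by blast
qed

lemma offdiag_witness:
  assumes X: "bounded_clinear X" and z: "norm z = 1" and q: "cmod q \<le> 1"
  obtains x y where "norm x = 1" and "norm y = 1" and "cinner x y = q"
    and "cinner (offdiag X x) y = q * cinner (X z) z"
proof -
  define r where "r = 1 / sqrt 2"
  define s where "s = sqrt (1 - (cmod q)\<^sup>2)"
  define a where "a = of_real r * (cnj q + of_real s)"
  define b where "b = of_real r * (cnj q - of_real s)"
  have r2: "r\<^sup>2 = 1 / 2"
    by (simp add: r_def power_divide)
  have s2: "s\<^sup>2 = 1 - (cmod q)\<^sup>2"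
    using q by (simp add: s_def power_le_one)
  have coeff: "of_real r * cnj a + of_real r * cnj b = q"
  proof -
    have "of_real r * cnj a + of_real r * cnj b = 2 * of_real (r\<^sup>2) * q"
      by (simp add: a_def b_def power2_eq_square algebra_simps)
    then show ?thesis
      by (simp add: r2)
  qed
  have "(cmod a)\<^sup>2 + (cmod b)\<^sup>2 = r\<^sup>2 * ((cmod (cnj q + of_real s))\<^sup>2 + (cmod (cnj q - of_real s))\<^sup>2)"
    unfolding a_def b_def norm_mult norm_of_real power_mult_distrib power2_abs
    by (simp only: distrib_left)
  also have "\<dots> = r\<^sup>2 * (2 * (cmod q)\<^sup>2 + 2 * s\<^sup>2)"
    by (simp add: cmod_power2 power2_sum power2_diff algebra_simps)
  also have "\<dots> = 1"
    by (simp add: r2 s2)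
  finally have ab: "(cmod a)\<^sup>2 + (cmod b)\<^sup>2 = 1" .
  have zz: "cinner z z = 1"
    using z by (simp add: cinner_self)
  define x where "x = (of_real r *\<^sub>C z, of_real r *\<^sub>C z)"
  define y where "y = (a *\<^sub>C z, b *\<^sub>C z)"
  have "cinner x y = of_real r * cnj a + of_real r * cnj b"
    by (simp add: x_def y_def cinner_prod_def cinner_scaleC_left cinner_scaleC_right zz)
  moreover have "cinner (offdiag X x) y = (of_real r * cnj a + of_real r * cnj b) * cinner (X z) z"
    by (simp add: x_def y_def offdiag_def bounded_clinear_scaleC[OF X] cinner_prod_def
        cinner_scaleC_left cinner_scaleC_right algebra_simps)
  moreover have "norm x = 1"
    by (simp add: x_def norm_Pair norm_scaleC z r2)
  moreover have "norm y = 1"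
    by (simp add: y_def norm_Pair norm_scaleC z ab)
  ultimately show thesis
    using that coeff by simp
qed

lemma wq_set_bdd_above:
  assumes "0 \<le> K" and "\<And>x. norm (T x) \<le> K * norm x"
  shows "bdd_above (insert 0 {cmod (cinner (T x) y) | x y. norm x = 1 \<and> norm y = 1 \<and> cinner x y = q})"
proof (rule bdd_aboveI)
  fix t
  assume "t \<in> insert 0 {cmod (cinner (T x) y) | x y. norm x = 1 \<and> norm y = 1 \<and> cinner x y = q}"
  then consider "t = 0" | x y where "t = cmod (cinner (T x) y)" "norm x = 1" "norm y = 1"
    by blast
  then show "t \<le> K"
  proof cases
    case 2
    then have "t \<le> norm (T x) * norm y"
      using cmod_cinner_le[of "T x" y] by simp
    also have "\<dots> \<le> K"
      using assms(2)[of x] 2 by simp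
    finally show ?thesis .
  qed (use assms in simp)
qed

lemma wq_nonneg:
  assumes "0 \<le> K" and "\<And>x. norm (T x) \<le> K * norm x"
  shows "0 \<le> wq q T"
  unfolding wq_def by (rule cSup_upper[OF _ wq_set_bdd_above[OF assms]]) simp

lemma cmod_cinner_le_wq:
  assumes "0 \<le> K" and "\<And>x. norm (T x) \<le> K * norm x"
    and "norm x = 1" and "norm y = 1" and "cinner x y = q"
  shows "cmod (cinner (T x) y) \<le> wq q T"
  unfolding wq_def by (rule cSup_upper[OF _ wq_set_bdd_above[OF assms(1,2)]]) (use assms in blast)

lemma cmod_cinner_le_wq_offdiag:
  assumes X: "bounded_clinear X" and "norm z = 1" and "cmod q \<le> 1"
  shows "cmod q * cmod (cinner (X z) z) \<le> wq q (offdiag X)"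
proof -
  obtain K where K: "0 \<le> K" "\<And>u. norm (offdiag X u) \<le> K * norm u"
    using offdiag_bound[OF X] by blast
  obtain x y where "norm x = 1" "norm y = 1" "cinner x y = q"
    and "cinner (offdiag X x) y = q * cinner (X z) z"
    using offdiag_witness[OF assms] .
  then show ?thesis
    using cmod_cinner_le_wq[OF K] by (metis norm_mult)
qed

theorem corollary3p8:
  fixes X :: "'a::chilbert_space \<Rightarrow> 'a" and q :: complex
  assumes "bounded_clinear X"
    and "q \<noteq> 0" and "cmod q \<le> 1"
  shows "wq q (offdiag X) \<ge>
           cmod q / 2 * onorm X + cmod q / 2 * \<bar>onorm (ReOp X) - onorm (ImOp X)\<bar>"
proof -
  have q: "0 < cmod q"
    using assms(2) by simp
  obtain K where "0 \<le> K" "\<And>u. norm (offdiag X u) \<le> K * norm u"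
    using offdiag_bound[OF assms(1)] by blast
  then have "0 \<le> wq q (offdiag X)"
    by (rule wq_nonneg)
  define M where "M = wq q (offdiag X) / cmod q"
  have "cmod (cinner (X z) z) \<le> M" if "norm z = 1" for z
    using cmod_cinner_le_wq_offdiag[OF assms(1) that assms(3)] q
    by (simp add: M_def pos_le_divide_eq mult.commute)
  moreover have "0 \<le> M"
    using \<open>0 \<le> wq q (offdiag X)\<close> q by (simp add: M_def)
  ultimately have "onorm X / 2 + \<bar>onorm (ReOp X) - onorm (ImOp X)\<bar> / 2 \<le> M"
    by (rule numerical_radius_lower_bound[OF assms(1)])
  then show ?thesis
    using q by (simp add: M_def pos_le_divide_eq algebra_simps)
qed

end
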